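(* Let $n$ be a positive integer and $p$ an odd prime. If $n$ is divisible by $4$, then the lists \[ \binom{n}{0}, \binom{n}{2}, \ldots, \binom{n}{n/2-2} \quad\text{and}\quad \binom{n}{1}, \binom{n}{3}, \ldots, \binom{n}{n/2-1} \] have the same number of elements divisible by $p$. If $n \equiv 2 \bmod 4$, then the lists \[ \binom{n}{0}, \binom{n}{2}, \ldots, \binom{n}{n/2-1} \quad\text{and}\quad \binom{n}{1}, \binom{n}{3}, \ldots, \binom{n}{n/2-2}, \binom{n}{n/2} \] have the same number of elements divisible by $p$. *)

theory Defs
  imports Main "HOL-Computational_Algebra.Primes"
begin

end

theory Submission
  imports Defs
begin

text \<open>
  By Lucas' theorem, \<open>p\<close> divides \<open>n choose (p*s + t)\<close> (with \<open>t < p\<close>) iff it divides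
  \<open>n div p choose s\<close> or \<open>t > n mod p\<close>. As \<open>p\<close> is odd, \<open>(-1)^(p*s + t) = (-1)^s * (-1)^t\<close>, so the
  alternating sum of \<open>(-1)^k\<close> over the \<open>k\<close> with \<open>p\<close> not dividing \<open>n choose k\<close> factors over the
  base-\<open>p\<close> digits \<open>d\<close> of \<open>n\<close> into the sums \<open>\<Sum>t\<le>d. (-1)^t\<close>: it is \<open>1\<close> if all digits of \<open>n\<close>
  are even and \<open>0\<close> otherwise. For \<open>n = 2*m\<close> all digits are even iff doubling \<open>m\<close> produces no
  carry, i.e. iff \<open>p\<close> does not divide \<open>2*m choose m\<close>. Hence the alternating sum over the \<open>k\<close>
  with \<open>p\<close> dividing \<open>2*m choose k\<close> is \<open>1\<close> or \<open>0\<close> according as \<open>p\<close> divides the central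
  coefficient or not. Folding it by the symmetry \<open>k \<mapsto> 2*m - k\<close> shows that below \<open>m\<close> the even and
  odd such \<open>k\<close> are equinumerous, up to one surplus even index when \<open>m\<close> is odd and \<open>p\<close> divides
  \<open>2*m choose m\<close>.
\<close>

lemma prime_dvd_choose_below_iff:
  assumes "prime p" and "r < p"
  shows "p dvd (r choose t) \<longleftrightarrow> r < t"
proof
  assume dvd: "p dvd (r choose t)"
  show "r < t"
  proof (rule ccontr)
    assume "\<not> r < t"
    then have "(fact r :: nat) = fact t * fact (r - t) * (r choose t)"
      using binomial_fact_lemma by simp
    then have "p dvd fact r"
      using dvd by (metis dvd_mult)
    then show False
      using assms prime_dvd_fact_iff by auto
  qed
qed (simp add: binomial_eq_0)

lemma lucas_product_pascal_mod:
  fixes p :: nat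
  defines "L \<equiv> \<lambda>n k. (n div p choose k div p) * (n mod p choose k mod p)"
  assumes "prime p"
  shows "L (Suc n) (Suc k) mod p = (L n k + L n (Suc k)) mod p"
proof -
  define Q r K t where "Q = n div p" "r = n mod p" "K = k div p" "t = k mod p"
  have "p > 1"
    using assms prime_gt_1_nat by blast
  then have "r < p" "t < p"
    using Q_r_K_t_def by auto
  consider "Suc r < p" "Suc t < p" | "Suc r < p" "Suc t = p" | "Suc r = p" "Suc t < p"
    | "Suc r = p" "Suc t = p"
    using \<open>r < p\<close> \<open>t < p\<close> by linarith
  then show ?thesis
  proof cases
    case 1
    then show ?thesis
      using Q_r_K_t_def by (simp add: L_def mod_Suc div_Suc algebra_simps)
  next
    case 2
    then show ?thesis
      using Q_r_K_t_def by (simp add: L_def mod_Suc div_Suc binomial_eq_0)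
  next
    case 3
    have "p dvd (p choose Suc t)"
      using dvd_choose_prime[of "Suc t" p] 3 assms by simp
    moreover have "p choose Suc t = (r choose t) + (r choose Suc t)"
      unfolding 3(1)[symmetric] by simp
    ultimately have "p dvd (Q choose K) * (r choose t) + (Q choose K) * (r choose Suc t)"
      by (metis add_mult_distrib2 dvd_mult)
    then show ?thesis
      using 3 Q_r_K_t_def by (simp add: L_def mod_Suc div_Suc)
  next
    case 4
    then have "n mod p = k mod p"
      using Q_r_K_t_def by simp
    with 4 show ?thesis
      using Q_r_K_t_def by (simp add: L_def mod_Suc div_Suc)
  qed
qed

theorem lucas_binomial_mod:
  fixes p :: nat
  assumes "prime p"
  shows "(n choose k) mod p = ((n div p choose k div p) * (n mod p choose k mod p)) mod p"
proof (induction n arbitrary: k)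
  case 0
  have "k div p \<noteq> 0 \<or> k mod p \<noteq> 0" if "k \<noteq> 0"
    using that div_mult_mod_eq[of k p] by auto
  then show ?case
    by (cases "k = 0") (auto simp: binomial_eq_0)
next
  case (Suc n)
  show ?case
  proof (cases k)
    case (Suc j)
    have "(Suc n choose Suc j) mod p = ((n choose j) + (n choose Suc j)) mod p"
      by simp
    also have "\<dots> = ((n div p choose j div p) * (n mod p choose j mod p)
        + (n div p choose Suc j div p) * (n mod p choose Suc j mod p)) mod p"
      by (rule mod_add_cong) (rule Suc.IH)+
    also have "\<dots> = ((Suc n div p choose Suc j div p) * (Suc n mod p choose Suc j mod p)) mod p"
      using lucas_product_pascal_mod[OF assms, of n j] by simp
    finally show ?thesis
      using Suc by simp
  qed simp
qed

corollary prime_dvd_choose_digit_iff: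
  assumes "prime p" and "t < p"
  shows "p dvd (n choose (p * s + t)) \<longleftrightarrow> p dvd (n div p choose s) \<or> n mod p < t"
proof -
  have "p dvd (n choose (p * s + t)) \<longleftrightarrow> p dvd (n div p choose s) * (n mod p choose t)"
    using lucas_binomial_mod[OF assms(1), of n "p * s + t"] assms(2)
    by (simp add: dvd_eq_mod_eq_0)
  also have "\<dots> \<longleftrightarrow> p dvd (n div p choose s) \<or> p dvd (n mod p choose t)"
    using assms(1) prime_dvd_mult_iff by blast
  also have "p dvd (n mod p choose t) \<longleftrightarrow> n mod p < t"
    using assms prime_dvd_choose_below_iff by simp
  finally show ?thesis .
qed

lemma sum_lessThan_mult_blocks:
  fixes f :: "nat \<Rightarrow> 'a :: comm_monoid_add"
  shows "(\<Sum>k<p * m. f k) = (\<Sum>s<m. \<Sum>t<p. f (p * s + t))"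
proof -
  have "(\<Sum>t<p. f (p * s + t)) = (\<Sum>k = s * p..<s * p + p. f k)" for s
    using sum.shift_bounds_nat_ivl[of f 0 "s * p" p]
    by (simp add: atLeast0LessThan algebra_simps)
  then show ?thesis
    using sum.nat_group[where g = f and k = p and n = m] by (simp add: mult.commute)
qed

lemma sum_atMost_minus_one_power:
  "(\<Sum>t\<le>r. (- 1 :: 'a :: ring_1) ^ t) = of_bool (even r)"
  by (induction r) auto

definition nondvd_alt_sum :: "nat \<Rightarrow> nat \<Rightarrow> int" where
  "nondvd_alt_sum p n = (\<Sum>k\<le>n. if p dvd (n choose k) then 0 else (- 1) ^ k)"

lemma nondvd_alt_sum_div_mod:
  assumes "prime p" and "odd p"
  shows "nondvd_alt_sum p n = nondvd_alt_sum p (n div p) * of_bool (even (n mod p))"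
proof -
  define Q r where "Q = n div p" "r = n mod p"
  have "p > 1"
    using assms prime_gt_1_nat by blast
  then have "r < p" and n_eq: "n = p * Q + r"
    using Q_r_def by simp_all
  define F where "F k = (if p dvd (n choose k) then 0 else (- 1 :: int) ^ k)" for k
  define G where "G s = (if p dvd (Q choose s) then 0 else (- 1 :: int) ^ s)" for s
  define H where "H t = (if t \<le> r then (- 1 :: int) ^ t else 0)" for t
  have F_digits: "F (p * s + t) = G s * H t" if "t < p" for s t
  proof -
    have "(- 1 :: int) ^ (p * s + t) = (- 1) ^ s * (- 1) ^ t"
      using assms(2) by (simp add: power_add power_mult)
    then show ?thesis
      unfolding F_def G_def H_def
      using prime_dvd_choose_digit_iff[OF assms(1) that, of n s] Q_r_def by auto
  qed
  have "nondvd_alt_sum p n = (\<Sum>k<p * Suc Q. F k)"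
    unfolding nondvd_alt_sum_def F_def
    by (rule sum.mono_neutral_left) (use n_eq \<open>r < p\<close> in \<open>auto simp: binomial_eq_0\<close>)
  also have "\<dots> = (\<Sum>s<Suc Q. \<Sum>t<p. F (p * s + t))"
    by (rule sum_lessThan_mult_blocks)
  also have "\<dots> = (\<Sum>s<Suc Q. \<Sum>t<p. G s * H t)"
    by (simp add: F_digits)
  also have "\<dots> = (\<Sum>s\<le>Q. G s) * (\<Sum>t<p. H t)"
    by (simp add: sum_product lessThan_Suc_atMost)
  also have "(\<Sum>t<p. H t) = (\<Sum>t\<le>r. (- 1) ^ t)"
    by (rule sum.mono_neutral_cong_right) (use \<open>r < p\<close> in \<open>auto simp: H_def\<close>)
  finally show ?thesis
    unfolding nondvd_alt_sum_def G_def sum_atMost_minus_one_power Q_r_def .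
qed

lemma nondvd_alt_sum_double:
  assumes "prime p" and "odd p"
  shows "nondvd_alt_sum p (2 * m) = of_bool (\<not> p dvd (2 * m choose m))"
proof (induction m rule: less_induct)
  case (less m)
  define a b where "a = m div p" "b = m mod p"
  have "p > 1"
    using assms prime_gt_1_nat by blast
  then have "b < p" and m_eq: "m = p * a + b"
    using a_b_def by simp_all
  show ?case
  proof (cases "m = 0")
    case False
    then have "a < m"
      using \<open>p > 1\<close> a_b_def by simp
    show ?thesis
    proof (cases "2 * b < p")
      case True
      have "2 * m = p * (2 * a) + 2 * b"
        using m_eq by simp
      then have digits: "2 * m div p = 2 * a" "2 * m mod p = 2 * b"
        using True by simp_all
      have "nondvd_alt_sum p (2 * m) = nondvd_alt_sum p (2 * a)"
        using nondvd_alt_sum_div_mod[OF assms, of "2 * m"] digits by simp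
      also have "\<dots> = of_bool (\<not> p dvd (2 * a choose a))"
        using less \<open>a < m\<close> by blast
      also have "p dvd (2 * a choose a) \<longleftrightarrow> p dvd (2 * m choose m)"
        using prime_dvd_choose_digit_iff[OF assms(1) \<open>b < p\<close>, of "2 * m" a] m_eq digits by simp
      finally show ?thesis .
    next
      case False
      \<comment> \<open>doubling the last digit carries, leaving the odd digit \<open>2 * b - p < b\<close>\<close>
      then have "2 * m = p * (2 * a + 1) + (2 * b - p)"
        using m_eq by (simp add: algebra_simps)
      moreover have "2 * b - p < p"
        using \<open>b < p\<close> by simp
      ultimately have digits: "2 * m div p = 2 * a + 1" "2 * m mod p = 2 * b - p"
        by (simp_all del: mult_Suc_right)
      have "2 * b - p < b"
        using \<open>b < p\<close> False by simp
      then have "p dvd (2 * m choose m)"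
        using prime_dvd_choose_digit_iff[OF assms(1) \<open>b < p\<close>, of "2 * m" a] m_eq digits
        by simp
      moreover have "odd (2 * b - p)"
        using False assms(2) by simp
      then have "nondvd_alt_sum p (2 * m) = 0"
        using nondvd_alt_sum_div_mod[OF assms, of "2 * m"] digits by simp
      ultimately show ?thesis
        by simp
    qed
  qed (use \<open>p > 1\<close> in \<open>simp add: nondvd_alt_sum_def\<close>)
qed

lemma dvd_alt_sum_double:
  assumes "prime p" and "odd p"
  shows "(\<Sum>k\<le>2 * m. if p dvd (2 * m choose k) then (- 1) ^ k else 0)
    = (of_bool (p dvd (2 * m choose m)) :: int)"
proof -
  have "(\<Sum>k\<le>2 * m. if p dvd (2 * m choose k) then (- 1) ^ k else 0)
      + nondvd_alt_sum p (2 * m) = (\<Sum>k\<le>2 * m. (- 1 :: int) ^ k)"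
    unfolding nondvd_alt_sum_def sum.distrib[symmetric] by (rule sum.cong) auto
  then show ?thesis
    using nondvd_alt_sum_double[OF assms, of m]
    by (cases "p dvd (2 * m choose m)") (simp_all add: sum_atMost_minus_one_power)
qed

lemma sum_atMost_double_symmetric:
  fixes F :: "nat \<Rightarrow> 'a :: semiring_1"
  assumes "\<And>k. k \<le> 2 * m \<Longrightarrow> F (2 * m - k) = F k"
  shows "(\<Sum>k\<le>2 * m. F k) = 2 * (\<Sum>k<m. F k) + F m"
proof -
  have "{..2 * m} = {..m} \<union> {m<..2 * m}"
    by auto
  then have "(\<Sum>k\<le>2 * m. F k) = (\<Sum>k\<le>m. F k) + (\<Sum>k\<in>{m<..2 * m}. F k)"
    by (simp add: sum.union_disjoint ivl_disj_int)
  also have "(\<Sum>k\<le>m. F k) = (\<Sum>k<m. F k) + F m"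
    by (simp flip: lessThan_Suc_atMost)
  also have "(\<Sum>k\<in>{m<..2 * m}. F k) = (\<Sum>k<m. F (2 * m - k))"
    by (rule sum.reindex_bij_witness[where i = "\<lambda>k. 2 * m - k" and j = "\<lambda>k. 2 * m - k"]) auto
  also have "\<dots> = (\<Sum>k<m. F k)"
    using assms by simp
  finally show ?thesis
    by (simp add: mult_2 algebra_simps)
qed

lemma sum_lessThan_minus_one_power_indicator:
  "(\<Sum>k<m. if P k then (- 1 :: int) ^ k else 0)
    = int (card {k. even k \<and> k < m \<and> P k}) - int (card {k. odd k \<and> k < m \<and> P k})"
proof -
  have "(\<Sum>k<m. if P k then (- 1 :: int) ^ k else 0)
      = (\<Sum>k<m. of_bool (even k \<and> P k)) - (\<Sum>k<m. of_bool (odd k \<and> P k))"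
    unfolding sum_subtractf[symmetric] by (rule sum.cong) auto
  moreover have "{..<m} \<inter> {k. even k \<and> P k} = {k. even k \<and> k < m \<and> P k}"
    and "{..<m} \<inter> {k. odd k \<and> P k} = {k. odd k \<and> k < m \<and> P k}"
    by auto
  ultimately show ?thesis
    by simp
qed

lemma card_even_minus_odd_dvd_choose_below_half:
  assumes "prime p" and "odd p"
  shows "int (card {k. even k \<and> k < m \<and> p dvd (2 * m choose k)})
      - int (card {k. odd k \<and> k < m \<and> p dvd (2 * m choose k)})
    = of_bool (odd m \<and> p dvd (2 * m choose m))"
proof -
  define F where "F k = (if p dvd (2 * m choose k) then (- 1 :: int) ^ k else 0)" for k
  have "F (2 * m - k) = F k" if "k \<le> 2 * m" for k
    using that by (simp add: F_def binomial_symmetric[symmetric] minus_one_power_iff)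
  then have "2 * (\<Sum>k<m. F k) + F m = (\<Sum>k\<le>2 * m. F k)"
    by (rule sum_atMost_double_symmetric[symmetric])
  also have "\<dots> = of_bool (p dvd (2 * m choose m))"
    unfolding F_def by (rule dvd_alt_sum_double[OF assms])
  finally have "(\<Sum>k<m. F k) = of_bool (odd m \<and> p dvd (2 * m choose m))"
    by (auto simp: F_def[of m] minus_one_power_iff split: if_split_asm)
  then show ?thesis
    unfolding F_def sum_lessThan_minus_one_power_indicator .
qed

lemma card_even_eq_odd_dvd_choose_even_half:
  assumes "prime p" and "odd p" and "even m" and "m > 0"
  shows "card {k. even k \<and> k \<le> m - 2 \<and> p dvd (2 * m choose k)}
    = card {k. odd k \<and> k \<le> m - 1 \<and> p dvd (2 * m choose k)}"
proof -
  have "k \<le> m - 2 \<longleftrightarrow> k < m" if "even k" for k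
    using that assms(3,4) by presburger
  then have "{k. even k \<and> k \<le> m - 2 \<and> p dvd (2 * m choose k)}
      = {k. even k \<and> k < m \<and> p dvd (2 * m choose k)}"
    by auto
  moreover have "{k. odd k \<and> k \<le> m - 1 \<and> p dvd (2 * m choose k)}
      = {k. odd k \<and> k < m \<and> p dvd (2 * m choose k)}"
    using assms(4) by auto
  ultimately show ?thesis
    using card_even_minus_odd_dvd_choose_below_half[OF assms(1,2), of m] assms(3) by simp
qed

lemma card_even_eq_odd_dvd_choose_odd_half:
  assumes "prime p" and "odd p" and "odd m"
  shows "card {k. even k \<and> k \<le> m - 1 \<and> p dvd (2 * m choose k)}
    = card {k. odd k \<and> k \<le> m \<and> p dvd (2 * m choose k)}"
proof -
  define Od where "Od = {k. odd k \<and> k < m \<and> p dvd (2 * m choose k)}"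
  have "k \<le> m - 1 \<longleftrightarrow> k < m" if "even k" for k
    using that assms(3) by presburger
  then have "{k. even k \<and> k \<le> m - 1 \<and> p dvd (2 * m choose k)}
      = {k. even k \<and> k < m \<and> p dvd (2 * m choose k)}"
    by auto
  moreover have "{k. odd k \<and> k \<le> m \<and> p dvd (2 * m choose k)}
      = Od \<union> {k. k = m \<and> p dvd (2 * m choose m)}"
    using assms(3) unfolding Od_def by (auto simp: le_less)
  moreover have "card (Od \<union> {k. k = m \<and> p dvd (2 * m choose m)})
      = card Od + of_bool (p dvd (2 * m choose m))"
    by (subst card_Un_disjoint) (auto simp: Od_def)
  ultimately show ?thesis
    using card_even_minus_odd_dvd_choose_below_half[OF assms(1,2), of m] assms(3)
    unfolding Od_def by (cases "p dvd (2 * m choose m)") auto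
qed

theorem lemma1p2:
  fixes n p :: nat
  assumes "n > 0" and "prime p" and "odd p"
  shows "(4 dvd n \<longrightarrow>
            card {k. even k \<and> k \<le> n div 2 - 2 \<and> p dvd (n choose k)}
          = card {k. odd k \<and> k \<le> n div 2 - 1 \<and> p dvd (n choose k)})
       \<and> (n mod 4 = 2 \<longrightarrow>
            card {k. even k \<and> k \<le> n div 2 - 1 \<and> p dvd (n choose k)}
          = card {k. odd k \<and> k \<le> n div 2 \<and> p dvd (n choose k)})"
proof (intro conjI impI)
  define m where "m = n div 2"
  assume "4 dvd n"
  then have "n = 2 * m" and "even m" and "m > 0"
    using assms(1) unfolding m_def by auto
  then show "card {k. even k \<and> k \<le> n div 2 - 2 \<and> p dvd (n choose k)}
      = card {k. odd k \<and> k \<le> n div 2 - 1 \<and> p dvd (n choose k)}"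
    using card_even_eq_odd_dvd_choose_even_half[OF assms(2,3), of m] by simp
next
  define m where "m = n div 2"
  assume "n mod 4 = 2"
  then have "n = 2 * m" and "odd m"
    unfolding m_def by presburger+
  then show "card {k. even k \<and> k \<le> n div 2 - 1 \<and> p dvd (n choose k)}
      = card {k. odd k \<and> k \<le> n div 2 \<and> p dvd (n choose k)}"
    using card_even_eq_odd_dvd_choose_odd_half[OF assms(2,3), of m] by simp
qed

end
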